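(* For every instance of the general contact-tracing model (described in the context) there is an optimal policy that is an index policy on the set of types, i.e., there is a total order on the set of types $T_{\mathrm{set}}=(C\cup\{\perp\})\times C$ such that the policy that always queries a frontier node whose type is earliest in this order is optimal. Moreover, such an order is produced by the following construction. For a type $i$ and a sequence $\sigma_0,\dots,\sigma_{k-1}$ of distinct types, an $(i,\sigma_{k-1})$-period starts with a frontier consisting of a single node of type $i$, queries it at relative step $0$, and thereafter at each relative step $s$ queries a frontier node whose type lies in $\{\sigma_0,\dots,\sigma_{k-1}\}$, choosing the type earliest in $\sigma_0,\dots,\sigma_{k-1}$, stopping when no frontier node has such a type; let $r(i,\sigma_{k-1})$ be the total benefit collected with benefits at relative step $s$ discounted by $e^{-\beta s}$, let $\tau(i,\sigma_{k-1})$ be the number of queries made, and $\gamma(i,\sigma_{k-1})=\mathbb{E}[e^{-\beta\tau(i,\sigma_{k-1})}]$ (for $k=0$ the period consists only of the single query of the type-$i$ node). Set $\sigma_0\in\arg\max_i \mathbb{E}[r(i,\emptyset)]$ and, for $k\ge 1$, $\sigma_k\in\arg\max_{i\notin\{\sigma_0,\dots,\sigma_{k-1}\}} \mathbb{E}[r(i,\sigma_{k-1})]/(1-\gamma(i,\sigma_{k-1}))$. The index policy defined by the resulting order $\sigma$ is optimal.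
   Context: General model. Fix a finite set $C$ of categories (each category encodes attributes such as a recency and a role), a super-root symbol $\perp$, a function $p:(C\cup\{\perp\})\times C\to[0,1]$, benefits $b(c)\in[0,1]$ for $c\in C$, for each $c\in C$ a probability distribution $D_c$ on finite multisets of elements of $C$, and a discount parameter $\beta>0$. Each node has a category; the type of a node is the pair $(c(u),c(v))$ where $v$ is the node and $u$ its parent (index cases have parent $\perp$). A node of type $(c',c)$ is infected independently with probability $p(c',c)$; if infected, its children form a multiset of categories drawn from $D_c$ independently of everything else, and a child of category $k$ has type $(c,k)$. Contact tracing: at step $t=0$ the frontier is a given finite multiset of index cases (with given categories, hence types $(\perp,c)$). At each step $t=0,1,2,\dots$ while the frontier is nonempty, the tracer selects one frontier node and queries it, removing it from the frontier; the query reveals its infection status; if it is infected and has category $c$, benefit $b(c)e^{-\beta t}$ is collected and its children (with their types) are added to the frontier; otherwise benefit $0$ is collected and nothing is added. Nodes of the same type are indistinguishable before being queried, so a policy is a (possibly history-dependent) rule choosing at each step which type present in the frontier to query. A policy is optimal if for every initial frontier it maximizes the expected total collected benefit over all policies. Ties in the arg max may be broken arbitrarily. *)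

theory Defs
  imports "HOL-Probability.Probability" "HOL-Library.Multiset"
begin

text \<open>Categories form a finite type 'c (so C = UNIV).  The super-root is None.
  A type of a node is the pair (category of parent or None, category of node).\<close>

type_synonym 'c ntype = "'c option \<times> 'c"
type_synonym 'c frontier = "'c ntype multiset"
text \<open>History: queried type together with the revealed outcome
  (None = not infected, Some M = infected with children multiset M).\<close>
type_synonym 'c hist = "('c ntype \<times> 'c multiset option) list"
type_synonym 'c policy = "'c hist \<Rightarrow> 'c frontier \<Rightarrow> 'c ntype"

definition children :: "'c ntype \<Rightarrow> 'c multiset \<Rightarrow> 'c frontier" where
  "children ty M = image_mset (\<lambda>k. (Some (snd ty), k)) M"

definition valid_policy :: "'c policy \<Rightarrow> bool" where
  "valid_policy pol \<longleftrightarrow> (\<forall>h F. F \<noteq> {#} \<longrightarrow> pol h F \<in># F)"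

primrec Vn :: "('c ntype \<Rightarrow> real) \<Rightarrow> ('c \<Rightarrow> real) \<Rightarrow> ('c \<Rightarrow> 'c multiset pmf) \<Rightarrow> real
    \<Rightarrow> nat \<Rightarrow> 'c policy \<Rightarrow> 'c hist \<Rightarrow> 'c frontier \<Rightarrow> real" where
  "Vn p b D \<beta> 0 pol h F = 0"
| "Vn p b D \<beta> (Suc n) pol h F =
     (if F = {#} then 0 else
      (let ty = pol h F; F' = F - {#ty#} in
         p ty * (b (snd ty) * exp (- \<beta> * real (length h))
                 + measure_pmf.expectation (D (snd ty))
                     (\<lambda>M. Vn p b D \<beta> n pol (h @ [(ty, Some M)]) (F' + children ty M)))
       + (1 - p ty) * Vn p b D \<beta> n pol (h @ [(ty, None)]) F'))"

definition policy_value :: "('c ntype \<Rightarrow> real) \<Rightarrow> ('c \<Rightarrow> real) \<Rightarrow> ('c \<Rightarrow> 'c multiset pmf) \<Rightarrow> real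
    \<Rightarrow> 'c policy \<Rightarrow> 'c frontier \<Rightarrow> real" where
  "policy_value p b D \<beta> pol F0 = (SUP n. Vn p b D \<beta> n pol [] F0)"

definition optimal_policy :: "('c ntype \<Rightarrow> real) \<Rightarrow> ('c \<Rightarrow> real) \<Rightarrow> ('c \<Rightarrow> 'c multiset pmf) \<Rightarrow> real
    \<Rightarrow> 'c policy \<Rightarrow> bool" where
  "optimal_policy p b D \<beta> pol \<longleftrightarrow> valid_policy pol \<and>
     (\<forall>F0. (\<forall>x\<in>#F0. fst x = None) \<longrightarrow>
        (\<forall>pol'. valid_policy pol' \<longrightarrow> policy_value p b D \<beta> pol' F0 \<le> policy_value p b D \<beta> pol F0))"

definition first_in :: "'c ntype list \<Rightarrow> 'c frontier \<Rightarrow> 'c ntype option" where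
  "first_in ps F = (case filter (\<lambda>x. x \<in># F) ps of [] \<Rightarrow> None | x # _ \<Rightarrow> Some x)"

definition index_policy :: "'c ntype list \<Rightarrow> 'c policy" where
  "index_policy \<sigma> h F = (case first_in \<sigma> F of Some x \<Rightarrow> x | None \<Rightarrow> undefined)"

definition is_type_order :: "'c ntype list \<Rightarrow> bool" where
  "is_type_order \<sigma> \<longleftrightarrow> distinct \<sigma> \<and> set \<sigma> = UNIV"

text \<open>Periods.  A chooser maps (relative step s, frontier) to the type queried, or None = stop.\<close>
primrec PRn :: "('c ntype \<Rightarrow> real) \<Rightarrow> ('c \<Rightarrow> real) \<Rightarrow> ('c \<Rightarrow> 'c multiset pmf) \<Rightarrow> real
    \<Rightarrow> nat \<Rightarrow> (nat \<Rightarrow> 'c frontier \<Rightarrow> 'c ntype option) \<Rightarrow> 'c frontier \<Rightarrow> nat \<Rightarrow> real" where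
  "PRn p b D \<beta> 0 ch F s = 0"
| "PRn p b D \<beta> (Suc n) ch F s =
     (case ch s F of None \<Rightarrow> 0
      | Some ty \<Rightarrow> (let F' = F - {#ty#} in
          p ty * (b (snd ty) * exp (- \<beta> * real s)
                  + measure_pmf.expectation (D (snd ty))
                      (\<lambda>M. PRn p b D \<beta> n ch (F' + children ty M) (Suc s)))
          + (1 - p ty) * PRn p b D \<beta> n ch F' (Suc s)))"

text \<open>Truncated approximations of E[exp(-beta * tau)] (tau = number of queries);
  runs not stopped within n steps contribute 0, and the limit treats tau = infinity as 0.\<close>
primrec PGn :: "('c ntype \<Rightarrow> real) \<Rightarrow> ('c \<Rightarrow> 'c multiset pmf) \<Rightarrow> real
    \<Rightarrow> nat \<Rightarrow> (nat \<Rightarrow> 'c frontier \<Rightarrow> 'c ntype option) \<Rightarrow> 'c frontier \<Rightarrow> nat \<Rightarrow> real" where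
  "PGn p D \<beta> 0 ch F s = 0"
| "PGn p D \<beta> (Suc n) ch F s =
     (case ch s F of None \<Rightarrow> exp (- \<beta> * real s)
      | Some ty \<Rightarrow> (let F' = F - {#ty#} in
          p ty * measure_pmf.expectation (D (snd ty))
                      (\<lambda>M. PGn p D \<beta> n ch (F' + children ty M) (Suc s))
          + (1 - p ty) * PGn p D \<beta> n ch F' (Suc s)))"

definition period_ch :: "'c ntype \<Rightarrow> 'c ntype list \<Rightarrow> nat \<Rightarrow> 'c frontier \<Rightarrow> 'c ntype option" where
  "period_ch i ps s F = (if s = 0 then Some i else first_in ps F)"

definition period_r :: "('c ntype \<Rightarrow> real) \<Rightarrow> ('c \<Rightarrow> real) \<Rightarrow> ('c \<Rightarrow> 'c multiset pmf) \<Rightarrow> real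
    \<Rightarrow> 'c ntype \<Rightarrow> 'c ntype list \<Rightarrow> real" where
  "period_r p b D \<beta> i ps = (SUP n. PRn p b D \<beta> n (period_ch i ps) {#i#} 0)"

definition period_gamma :: "('c ntype \<Rightarrow> real) \<Rightarrow> ('c \<Rightarrow> 'c multiset pmf) \<Rightarrow> real
    \<Rightarrow> 'c ntype \<Rightarrow> 'c ntype list \<Rightarrow> real" where
  "period_gamma p D \<beta> i ps = (SUP n. PGn p D \<beta> n (period_ch i ps) {#i#} 0)"

definition constructed_order :: "('c ntype \<Rightarrow> real) \<Rightarrow> ('c \<Rightarrow> real) \<Rightarrow> ('c \<Rightarrow> 'c multiset pmf) \<Rightarrow> real
    \<Rightarrow> 'c ntype list \<Rightarrow> bool" where
  "constructed_order p b D \<beta> \<sigma> \<longleftrightarrow> is_type_order \<sigma> \<and>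
     (\<forall>i. period_r p b D \<beta> i [] \<le> period_r p b D \<beta> (\<sigma> ! 0) []) \<and>
     (\<forall>k. 1 \<le> k \<and> k < length \<sigma> \<longrightarrow>
        (\<forall>i. i \<notin> set (take k \<sigma>) \<longrightarrow>
           period_r p b D \<beta> i (take k \<sigma>) / (1 - period_gamma p D \<beta> i (take k \<sigma>))
           \<le> period_r p b D \<beta> (\<sigma> ! k) (take k \<sigma>) / (1 - period_gamma p D \<beta> (\<sigma> ! k) (take k \<sigma>))))"

end

theory Submission
  imports Defs
begin

text \<open>
  The value of a priority-list policy is the unique bounded fixed point of a Bellman operator
  that contracts the supremum norm by \<open>q = e\<^sup>-\<^sup>\<beta>\<close>, so every identity needed about such
  values (linearity, invariance under adding untouched nodes to the frontier, and the
  commutation of two periods started from distinct nodes) follows by exhibiting another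
  bounded fixed point.  By the usual verification argument on finite-horizon values, the
  index policy of an order \<open>\<sigma>\<close> is optimal once querying any frontier node \<open>j\<close> first and
  following \<open>\<sigma>\<close> afterwards is never better than following \<open>\<sigma>\<close>.  For the greedy order this
  is shown by downward induction on \<open>k\<close>, for frontiers without the types
  \<open>\<sigma>\<^sub>0, \<dots>, \<sigma>\<^sub>k\<^sub>-\<^sub>1\<close>: if \<open>c = \<sigma>\<^sub>k\<close> is present, compare a \<open>(j, \<sigma>\<^sub>k\<^sub>-\<^sub>1)\<close>-period followed by a
  \<open>(c, \<sigma>\<^sub>k\<^sub>-\<^sub>1)\<close>-period with the two periods in the opposite order.  The greedy condition
  \<open>r\<^sub>j (1 - \<gamma>\<^sub>c) \<le> r\<^sub>c (1 - \<gamma>\<^sub>j)\<close> pays for the exchange up to an error that is multiplied by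
  \<open>\<gamma>\<^sub>c \<le> q\<close>, so the error vanishes.
\<close>

lemma geometric_tendsto_0:
  fixes q C :: real
  assumes "0 \<le> q" "q < 1"
  shows "(\<lambda>n. q ^ n * C) \<longlonglongrightarrow> 0"
proof -
  have "(\<lambda>n. q ^ n) \<longlonglongrightarrow> 0"
    using assms by (intro LIMSEQ_power_zero) simp
  from tendsto_mult[OF this tendsto_const, of C] show ?thesis
    by simp
qed

lemma le_0_if_le_geometric:
  fixes x q C :: real
  assumes "\<And>n. x \<le> q ^ n * C" "0 \<le> q" "q < 1"
  shows "x \<le> 0"
  using geometric_tendsto_0[OF assms(2,3), of C] by (rule LIMSEQ_le_const) (use assms(1) in blast)

lemma LIMSEQ_if_geometric_error:
  fixes X :: "nat \<Rightarrow> real"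
  assumes "\<And>n. \<bar>X n - L\<bar> \<le> q ^ n * C" "0 \<le> q" "q < 1"
  shows "X \<longlonglongrightarrow> L"
proof -
  have "(\<lambda>n. X n - L) \<longlonglongrightarrow> 0"
    using geometric_tendsto_0[OF assms(2,3), of C] by (rule Lim_null_comparison[rotated]) (simp add: assms(1))
  then show ?thesis
    by (simp add: LIM_zero_cancel)
qed

lemma SUP_eq_lim:
  fixes X :: "nat \<Rightarrow> real"
  assumes "incseq X" "X \<longlonglongrightarrow> L"
  shows "(SUP n. X n) = L"
proof -
  have "bdd_above (range X)"
    using incseq_le[OF assms] by (intro bdd_aboveI2)
  from LIMSEQ_incseq_SUP[OF this assms(1)] show ?thesis
    using assms(2) by (rule LIMSEQ_unique)
qed

lemma nonpos_if_bound_contracts: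
  fixes f :: "'a \<Rightarrow> real"
  assumes "0 \<le> q" "q < 1" "\<And>x. P x \<Longrightarrow> f x \<le> C"
    and contract: "\<And>\<delta> x. 0 \<le> \<delta> \<Longrightarrow> (\<And>y. P y \<Longrightarrow> f y \<le> \<delta>) \<Longrightarrow> P x \<Longrightarrow> f x \<le> q * \<delta>"
    and "P x"
  shows "f x \<le> 0"
proof -
  have "f y \<le> q ^ n * \<bar>C\<bar>" if "P y" for n y
    using that
  proof (induction n arbitrary: y)
    case 0
    then show ?case
      using assms(3) by force
  next
    case (Suc n)
    then show ?case
      using contract[of "q ^ n * \<bar>C\<bar>"] assms(1) by (simp add: mult.assoc)
  qed
  then show ?thesis
    using assms(1,2,5) by (intro le_0_if_le_geometric)
qed

lemma bounded_range_iff: "bounded (range f) \<longleftrightarrow> (\<exists>B. \<forall>x. \<bar>f x\<bar> \<le> B)"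
  for f :: "'a \<Rightarrow> real"
  by (simp add: bounded_iff)

lemma bounded_range_const [simp]: "bounded (range (\<lambda>_. c :: real))"
  by (auto simp: bounded_range_iff)

lemma bounded_range_finite: "bounded (range f)"
  for f :: "'a::finite \<Rightarrow> real"
  by (simp add: finite_imp_bounded)

lemma bounded_range_comp: "bounded (range f) \<Longrightarrow> bounded (range (\<lambda>x. f (g x)))"
  for f :: "'a \<Rightarrow> real"
  by (rule bounded_subset) auto

lemma bounded_range_const_add: "bounded (range f) \<Longrightarrow> bounded (range (\<lambda>x. c + f x))"
  for f :: "'a \<Rightarrow> real"
  using bounded_translation[of "range f" c] by (simp add: image_image)

lemma bounded_range_linear:
  fixes f g :: "'a \<Rightarrow> real"
  assumes "bounded (range f)" "bounded (range g)"
  shows "bounded (range (\<lambda>x. u * f x + v * g x))"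
  using bounded_plus_comp[OF bounded_scaleR_comp[OF assms(1)] bounded_scaleR_comp[OF assms(2)]]
  by simp

lemma integrable_pmf_bounded:
  fixes f :: "'a \<Rightarrow> real"
  assumes "bounded (range f)"
  shows "integrable (measure_pmf P) f"
proof -
  obtain B where "\<And>x. \<bar>f x\<bar> \<le> B"
    using assms by (auto simp: bounded_range_iff)
  then show ?thesis
    by (intro measure_pmf.integrable_const_bound[where B = B]) auto
qed

lemma integrable_pmf_comp: "bounded (range f) \<Longrightarrow> integrable (measure_pmf P) (\<lambda>x. f (h x))"
  for f :: "'a \<Rightarrow> real"
  by (rule integrable_pmf_bounded[OF bounded_range_comp])

lemma expectation_abs_le:
  fixes f :: "'a \<Rightarrow> real" and P :: "'a pmf"
  assumes "\<And>x. \<bar>f x\<bar> \<le> C"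
  shows "\<bar>\<integral>x. f x \<partial>P\<bar> \<le> C"
proof -
  have "0 \<le> C"
    using assms[of undefined] by linarith
  have "\<bar>\<integral>x. f x \<partial>P\<bar> \<le> (\<integral>x. \<bar>f x\<bar> \<partial>P)"
    using integral_norm_bound[of "measure_pmf P" f] by simp
  also have "\<dots> \<le> (\<integral>x. C \<partial>P)"
    using assms \<open>0 \<le> C\<close>
    by (intro integral_mono measure_pmf.integrable_const_bound[where B = C]) auto
  finally show ?thesis
    by simp
qed

lemma expectation_commute:
  fixes f :: "'a \<Rightarrow> 'b \<Rightarrow> real" and P :: "'a pmf" and Q :: "'b pmf"
  assumes "bounded (range (case_prod f))"
  shows "(\<integral>x. \<integral>y. f x y \<partial>Q \<partial>P) = (\<integral>y. \<integral>x. f x y \<partial>P \<partial>Q)"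
proof -
  obtain B where B: "\<And>x y. \<bar>f x y\<bar> \<le> B"
    using assms by (auto simp: bounded_range_iff)
  have bind: "(\<integral>z. h z \<partial>bind_pmf A K) = (\<integral>x. \<integral>z. h z \<partial>K x \<partial>A)"
    if "\<And>z. \<bar>h z\<bar> \<le> B" for A :: "'x pmf" and K :: "'x \<Rightarrow> 'z pmf" and h :: "'z \<Rightarrow> real"
    unfolding measure_pmf_bind
    by (rule integral_bind[where B = B and B' = 1 and K = "count_space UNIV"])
       (auto simp: that measure_pmf_in_subprob_space
             intro: measure_pmf.finite_measure)
  have pair: "(\<integral>z. h z \<partial>pair_pmf A A') = (\<integral>x. \<integral>y. h (x, y) \<partial>A' \<partial>A)"
    if "\<And>z. \<bar>h z\<bar> \<le> B" for A :: "'x pmf" and A' :: "'y pmf" and h :: "'x \<times> 'y \<Rightarrow> real"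
    unfolding pair_pmf_def by (subst bind, fact that)+ simp
  have "(\<integral>x. \<integral>y. f x y \<partial>Q \<partial>P) = (\<integral>z. case_prod f z \<partial>pair_pmf P Q)"
    by (subst pair) (auto simp: B)
  also have "\<dots> = (\<integral>z. case_prod (\<lambda>y x. f x y) z \<partial>pair_pmf Q P)"
    by (subst pair_commute_pmf) (simp add: case_prod_unfold)
  also have "\<dots> = (\<integral>y. \<integral>x. f x y \<partial>P \<partial>Q)"
    by (subst pair) (auto simp: B)
  finally show ?thesis .
qed

lemma convex_comb_abs_le:
  fixes u x y d :: real
  assumes "0 \<le> u" "u \<le> 1" "\<bar>x\<bar> \<le> d" "\<bar>y\<bar> \<le> d"
  shows "\<bar>u * x + (1 - u) * y\<bar> \<le> d"
proof -
  have "\<bar>u * x + (1 - u) * y\<bar> \<le> u * \<bar>x\<bar> + (1 - u) * \<bar>y\<bar>"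
    using assms(1,2) abs_triangle_ineq[of "u * x" "(1 - u) * y"] by (simp add: abs_mult)
  also have "\<dots> \<le> u * d + (1 - u) * d"
    using assms by (intro add_mono mult_left_mono) auto
  finally show ?thesis
    by (simp add: algebra_simps)
qed

section \<open>Fixed points of sup-norm contractions\<close>

definition iterate_limit :: "(('a \<Rightarrow> real) \<Rightarrow> 'a \<Rightarrow> real) \<Rightarrow> 'a \<Rightarrow> real" where
  "iterate_limit \<Phi> x = lim (\<lambda>n. (\<Phi> ^^ n) (\<lambda>_. 0) x)"

locale sup_contraction =
  fixes q :: real and \<Phi> :: "('a \<Rightarrow> real) \<Rightarrow> 'a \<Rightarrow> real"
  assumes q_nonneg: "0 \<le> q" and q_less_1: "q < 1"
    and bounded_image: "bounded (range Z) \<Longrightarrow> bounded (range (\<Phi> Z))"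
    and contracts: "bounded (range Z) \<Longrightarrow> bounded (range Z') \<Longrightarrow> (\<And>y. \<bar>Z y - Z' y\<bar> \<le> d)
      \<Longrightarrow> \<bar>\<Phi> Z x - \<Phi> Z' x\<bar> \<le> q * d"
begin

abbreviation iterate :: "nat \<Rightarrow> 'a \<Rightarrow> real" where
  "iterate n \<equiv> (\<Phi> ^^ n) (\<lambda>_. 0)"

lemma iterate_cauchy:
  obtains K where "\<And>n x. \<bar>iterate n x\<bar> \<le> K"
    and "\<And>n m x. \<bar>iterate (n + m) x - iterate n x\<bar> \<le> q ^ n * K"
proof -
  obtain B where B: "\<And>x. \<bar>\<Phi> (\<lambda>_. 0) x\<bar> \<le> B"
    using bounded_image[of "\<lambda>_. 0"] by (auto simp: bounded_range_iff)
  define K where "K = B / (1 - q)"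
  have "0 \<le> B"
    using B[of undefined] by linarith
  then have K: "q * K + B = K" "0 \<le> K"
    using q_nonneg q_less_1 by (auto simp: K_def field_simps)
  have bound: "\<bar>iterate n x\<bar> \<le> K" for n x
  proof (induction n arbitrary: x)
    case 0
    show ?case
      using K by simp
  next
    case (Suc n)
    have "\<bar>\<Phi> (iterate n) x - \<Phi> (\<lambda>_. 0) x\<bar> \<le> q * K"
      by (rule contracts) (use Suc.IH in \<open>auto simp: bounded_range_iff\<close>)
    then show ?case
      using B[of x] K by simp
  qed
  have "\<bar>iterate (n + m) x - iterate n x\<bar> \<le> q ^ n * K" for n m x
  proof (induction n arbitrary: x)
    case 0
    show ?case
      using bound by simp
  next
    case (Suc n)
    have "\<bar>\<Phi> (iterate (n + m)) x - \<Phi> (iterate n) x\<bar> \<le> q * (q ^ n * K)"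
      by (rule contracts) (use bound Suc.IH in \<open>auto simp: bounded_range_iff\<close>)
    then show ?case
      by (simp add: mult.assoc)
  qed
  with bound show thesis
    by (rule that)
qed

lemma bounded_iterate: "bounded (range (iterate n))"
proof -
  obtain K where "\<And>n x. \<bar>iterate n x\<bar> \<le> K"
    using iterate_cauchy by metis
  then show ?thesis
    by (auto simp: bounded_range_iff)
qed

lemma iterate_limit_error:
  obtains K where "\<And>n x. \<bar>iterate_limit \<Phi> x - iterate n x\<bar> \<le> q ^ n * K"
proof -
  obtain K where cauchy: "\<And>n m x. \<bar>iterate (n + m) x - iterate n x\<bar> \<le> q ^ n * K"
    using iterate_cauchy by metis
  have "convergent (\<lambda>n. iterate n x)" for x
  proof -
    have "summable (\<lambda>n. q ^ n * K)"
      using q_nonneg q_less_1 by (intro summable_mult2 summable_geometric) simp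
    moreover have "norm (iterate (Suc n) x - iterate n x) \<le> q ^ n * K" for n
      using cauchy[of n 1 x] by simp
    ultimately have "summable (\<lambda>n. iterate (Suc n) x - iterate n x)"
      by (rule summable_comparison_test')
    moreover have "(\<Sum>i<n. iterate (Suc i) x - iterate i x) = iterate n x" for n
      by (induction n) simp_all
    ultimately show ?thesis
      by (simp only: summable_iff_convergent)
  qed
  then have lim: "(\<lambda>m. iterate (m + n) x) \<longlonglongrightarrow> iterate_limit \<Phi> x" for n x
    unfolding iterate_limit_def by (intro LIMSEQ_ignore_initial_segment) (simp add: convergent_LIMSEQ_iff)
  have "\<bar>iterate_limit \<Phi> x - iterate n x\<bar> \<le> q ^ n * K" for n x
  proof (rule LIMSEQ_le_const2)
    show "(\<lambda>m. \<bar>iterate (m + n) x - iterate n x\<bar>) \<longlonglongrightarrow> \<bar>iterate_limit \<Phi> x - iterate n x\<bar>"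
      by (intro tendsto_rabs tendsto_diff lim tendsto_const)
    have "\<bar>iterate (m + n) x - iterate n x\<bar> \<le> q ^ n * K" for m
      using cauchy[of n m x] by (simp add: add.commute)
    then show "\<exists>N. \<forall>m\<ge>N. \<bar>iterate (m + n) x - iterate n x\<bar> \<le> q ^ n * K"
      by blast
  qed
  then show thesis
    by (rule that)
qed

lemma iterate_tendsto: "(\<lambda>n. iterate n x) \<longlonglongrightarrow> iterate_limit \<Phi> x"
proof -
  obtain K where "\<And>n x. \<bar>iterate_limit \<Phi> x - iterate n x\<bar> \<le> q ^ n * K"
    using iterate_limit_error by metis
  then show ?thesis
    using q_nonneg q_less_1 by (intro LIMSEQ_if_geometric_error) (auto simp: abs_minus_commute)
qed

lemma bounded_iterate_limit: "bounded (range (iterate_limit \<Phi>))"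
proof -
  obtain K where "\<And>n x. \<bar>iterate_limit \<Phi> x - iterate n x\<bar> \<le> q ^ n * K"
    using iterate_limit_error by metis
  from this[where n = 0] show ?thesis
    by (auto simp: bounded_range_iff)
qed

lemma iterate_limit_abs_le:
  assumes "\<And>n. \<bar>iterate n x\<bar> \<le> C"
  shows "\<bar>iterate_limit \<Phi> x\<bar> \<le> C"
  by (rule LIMSEQ_le_const2[OF tendsto_rabs[OF iterate_tendsto]]) (use assms in blast)

lemma iterate_limit_fixpoint: "\<Phi> (iterate_limit \<Phi>) = iterate_limit \<Phi>"
proof
  fix x
  obtain K where K: "\<And>n x. \<bar>iterate_limit \<Phi> x - iterate n x\<bar> \<le> q ^ n * K"
    using iterate_limit_error by metis
  have "(\<lambda>n. \<Phi> (iterate n) x) \<longlonglongrightarrow> \<Phi> (iterate_limit \<Phi>) x"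
  proof (rule LIMSEQ_if_geometric_error[OF _ q_nonneg q_less_1])
    show "\<bar>\<Phi> (iterate n) x - \<Phi> (iterate_limit \<Phi>) x\<bar> \<le> q ^ n * (q * K)" for n
      using contracts[OF bounded_iterate bounded_iterate_limit, of n "q ^ n * K" x] K
      by (simp add: abs_minus_commute mult.left_commute)
  qed
  moreover have "(\<lambda>n. \<Phi> (iterate n) x) \<longlonglongrightarrow> iterate_limit \<Phi> x"
    using LIMSEQ_Suc[OF iterate_tendsto] by simp
  ultimately show "\<Phi> (iterate_limit \<Phi>) x = iterate_limit \<Phi> x"
    by (rule LIMSEQ_unique)
qed

lemma fixpoint_unique:
  assumes "\<Phi> Z = Z" "bounded (range Z)"
  shows "Z = iterate_limit \<Phi>"
proof
  fix x
  obtain d where d: "\<And>y. \<bar>Z y - iterate_limit \<Phi> y\<bar> \<le> d"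
    using bounded_minus_comp[OF assms(2) bounded_iterate_limit] by (auto simp: bounded_range_iff)
  have "\<bar>Z y - iterate_limit \<Phi> y\<bar> \<le> q ^ n * d" for n y
  proof (induction n arbitrary: y)
    case 0
    show ?case
      using d by simp
  next
    case (Suc n)
    have "\<bar>\<Phi> Z y - \<Phi> (iterate_limit \<Phi>) y\<bar> \<le> q * (q ^ n * d)"
      by (rule contracts[OF assms(2) bounded_iterate_limit Suc.IH])
    then show ?case
      by (simp add: assms(1) iterate_limit_fixpoint mult.assoc)
  qed
  then have "\<bar>Z x - iterate_limit \<Phi> x\<bar> \<le> 0"
    using q_nonneg q_less_1 by (intro le_0_if_le_geometric)
  then show "Z x = iterate_limit \<Phi> x"
    by simp
qed

context
  assumes mono: "\<And>Z Z'. bounded (range Z) \<Longrightarrow> bounded (range Z') \<Longrightarrow> Z \<le> Z' \<Longrightarrow> \<Phi> Z \<le> \<Phi> Z'"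
    and nonneg_at_0: "(\<lambda>_. 0) \<le> \<Phi> (\<lambda>_. 0)"
begin

lemma incseq_iterate: "incseq (\<lambda>n. iterate n x)"
proof -
  have "iterate n \<le> iterate (Suc n)" for n
  proof (induction n)
    case 0
    show ?case
      using nonneg_at_0 by simp
  next
    case (Suc n)
    show ?case
      using mono[OF bounded_iterate bounded_iterate Suc.IH] by simp
  qed
  then show ?thesis
    by (intro incseq_SucI) (simp add: le_fun_def)
qed

lemma SUP_iterate: "(SUP n. iterate n x) = iterate_limit \<Phi> x"
  using incseq_iterate iterate_tendsto by (rule SUP_eq_lim)

lemma iterate_limit_nonneg: "0 \<le> iterate_limit \<Phi> x"
proof (rule LIMSEQ_le_const[OF iterate_tendsto])
  have "iterate 0 x \<le> iterate n x" for n
    using incseq_iterate[of x] by (rule incseqD) simp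
  then show "\<exists>N. \<forall>n\<ge>N. 0 \<le> iterate n x"
    by auto
qed

end

end

lemma first_in_None_iff: "first_in ps F = None \<longleftrightarrow> set ps \<inter> set_mset F = {}"
proof -
  have "first_in ps F = None \<longleftrightarrow> filter (\<lambda>x. x \<in># F) ps = []"
    by (auto simp: first_in_def split: list.splits)
  then show ?thesis
    by (auto simp: filter_empty_conv)
qed

lemma first_in_SomeD:
  assumes "first_in ps F = Some a"
  shows "a \<in># F" "a \<in> set ps"
proof -
  obtain r where "filter (\<lambda>x. x \<in># F) ps = a # r"
    using assms unfolding first_in_def by (auto split: list.splits)
  then have "a \<in> set (filter (\<lambda>x. x \<in># F) ps)"
    by simp
  then show "a \<in># F" "a \<in> set ps"
    by simp_all
qed

lemma first_in_take: "first_in (take k ps) F = Some a \<Longrightarrow> first_in ps F = Some a"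
  unfolding first_in_def
  by (subst append_take_drop_id[of k ps, symmetric], subst filter_append) (auto split: list.splits)

lemma first_in_nth:
  assumes "k < length ps" "set (take k ps) \<inter> set_mset F = {}" "ps ! k \<in># F"
  shows "first_in ps F = Some (ps ! k)"
proof -
  have "filter (\<lambda>x. x \<in># F) (take k ps) = []"
    using assms(2) by (auto simp: filter_empty_conv)
  then have "filter (\<lambda>x. x \<in># F) ps = ps ! k # filter (\<lambda>x. x \<in># F) (drop (Suc k) ps)"
    using assms(1,3) by (subst id_take_nth_drop[OF assms(1)]) simp
  then show ?thesis
    unfolding first_in_def by simp
qed

lemma first_in_add_disjoint:
  assumes "set ps \<inter> set_mset H = {}"
  shows "first_in ps (G + H) = first_in ps G"
proof -
  have "filter (\<lambda>x. x \<in># G + H) ps = filter (\<lambda>x. x \<in># G) ps"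
    using assms by (intro filter_cong) auto
  then show ?thesis
    unfolding first_in_def by simp
qed

lemma first_in_UNIV: "set ps = UNIV \<Longrightarrow> F \<noteq> {#} \<Longrightarrow> first_in ps F \<noteq> None"
  by (auto simp: first_in_None_iff)

lemma greedy_enumeration_exists:
  fixes score :: "'a::finite list \<Rightarrow> 'a \<Rightarrow> 'b::linorder"
  shows "\<exists>\<sigma>. distinct \<sigma> \<and> set \<sigma> = UNIV \<and>
    (\<forall>k < length \<sigma>. \<forall>i. i \<notin> set (take k \<sigma>) \<longrightarrow> score (take k \<sigma>) i \<le> score (take k \<sigma>) (\<sigma> ! k))"
proof -
  let ?greedy = "\<lambda>\<sigma>. \<forall>k < length \<sigma>. \<forall>i. i \<notin> set (take k \<sigma>) \<longrightarrow> score (take k \<sigma>) i \<le> score (take k \<sigma>) (\<sigma> ! k)"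
  have "\<exists>\<sigma>. length \<sigma> = n \<and> distinct \<sigma> \<and> ?greedy \<sigma>" if "n \<le> CARD('a)" for n
    using that
  proof (induction n)
    case (Suc n)
    then obtain \<sigma> where \<sigma>: "length \<sigma> = n" "distinct \<sigma>" "?greedy \<sigma>"
      by auto
    let ?A = "UNIV - set \<sigma>"
    have "card (set \<sigma>) < CARD('a)"
      using \<sigma> Suc.prems by (simp add: distinct_card)
    then have "set \<sigma> \<noteq> UNIV"
      by (metis less_irrefl)
    then have "?A \<noteq> {}"
      by auto
    then have "Max (score \<sigma> ` ?A) \<in> score \<sigma> ` ?A"
      by (intro Max_in) auto
    then obtain x where x: "x \<in> ?A" "score \<sigma> x = Max (score \<sigma> ` ?A)"
      by auto
    then have x_max: "score \<sigma> i \<le> score \<sigma> x" if "i \<notin> set \<sigma>" for i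
      using that by simp
    have "?greedy (\<sigma> @ [x])"
    proof (intro allI impI)
      fix k i
      assume "k < length (\<sigma> @ [x])" "i \<notin> set (take k (\<sigma> @ [x]))"
      then consider "k < n" | "k = n"
        using \<sigma>(1) by fastforce
      then show "score (take k (\<sigma> @ [x])) i \<le> score (take k (\<sigma> @ [x])) ((\<sigma> @ [x]) ! k)"
        using \<open>i \<notin> set (take k (\<sigma> @ [x]))\<close> \<sigma> x_max by cases (auto simp: nth_append)
    qed
    then show ?case
      using \<sigma> x by (intro exI[of _ "\<sigma> @ [x]"]) auto
  qed simp
  then obtain \<sigma> where \<sigma>: "length \<sigma> = CARD('a)" "distinct \<sigma>" "?greedy \<sigma>"
    by blast
  then have "set \<sigma> = UNIV"
    by (simp add: card_eq_UNIV_imp_eq_UNIV distinct_card)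
  with \<sigma> show ?thesis
    by blast
qed

section \<open>Runs of the tracing process under a priority list\<close>

locale contact_tracing =
  fixes p :: "('c::finite) ntype \<Rightarrow> real" and b :: "'c \<Rightarrow> real"
    and D :: "'c \<Rightarrow> 'c multiset pmf" and \<beta> :: real
  assumes p_prob: "\<And>ty. 0 \<le> p ty \<and> p ty \<le> 1"
    and b_unit: "\<And>c. 0 \<le> b c \<and> b c \<le> 1"
    and \<beta>_pos: "\<beta> > 0"
begin

definition q :: real where
  "q = exp (- \<beta>)"

lemma q_pos: "0 < q" and q_less_1: "q < 1"
  using \<beta>_pos by (auto simp: q_def)

lemma p_nonneg: "0 \<le> p ty" and p_le_1: "p ty \<le> 1"
  using p_prob by auto

text \<open>The integral of a non-integrable function is \<open>0\<close>; this is why the lemmas below assume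
  the continuation values to be bounded.\<close>

definition query :: "('c \<Rightarrow> real) \<Rightarrow> 'c ntype \<Rightarrow> ('c frontier \<Rightarrow> real) \<Rightarrow> 'c frontier \<Rightarrow> real" where
  "query r a Z G =
     p a * (r (snd a) + q * (\<integral>M. Z (G - {#a#} + children a M) \<partial>D (snd a)))
     + (1 - p a) * (q * Z (G - {#a#}))"

lemma query_diff_abs_le:
  assumes "bounded (range Z)" "bounded (range Z')" "\<And>G. \<bar>Z G - Z' G\<bar> \<le> d"
  shows "\<bar>query r a Z G - query r a Z' G\<bar> \<le> q * d"
proof -
  let ?E = "\<lambda>Z. \<integral>M. Z (G - {#a#} + children a M) \<partial>D (snd a)"
  have "?E Z - ?E Z' = (\<integral>M. Z (G - {#a#} + children a M) - Z' (G - {#a#} + children a M) \<partial>D (snd a))"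
    using assms(1,2) by (intro Bochner_Integration.integral_diff[symmetric] integrable_pmf_comp)
  then have "\<bar>?E Z - ?E Z'\<bar> \<le> d"
    using assms(3) by (simp add: expectation_abs_le)
  then have "\<bar>p a * (?E Z - ?E Z') + (1 - p a) * (Z (G - {#a#}) - Z' (G - {#a#}))\<bar> \<le> d"
    using assms(3) p_nonneg p_le_1 by (intro convex_comb_abs_le)
  moreover have "query r a Z G - query r a Z' G
      = q * (p a * (?E Z - ?E Z') + (1 - p a) * (Z (G - {#a#}) - Z' (G - {#a#})))"
    unfolding query_def by (simp add: algebra_simps)
  ultimately show ?thesis
    using q_pos by (simp add: abs_mult)
qed

lemma query_mono:
  assumes "bounded (range Z)" "bounded (range Z')" "Z \<le> Z'"
  shows "query r a Z G \<le> query r a Z' G"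
proof -
  have "(\<integral>M. Z (G - {#a#} + children a M) \<partial>D (snd a)) \<le> (\<integral>M. Z' (G - {#a#} + children a M) \<partial>D (snd a))"
    using assms by (intro integral_mono integrable_pmf_comp) (auto simp: le_fun_def)
  then show ?thesis
    unfolding query_def using assms(3) q_pos p_nonneg[of a] p_le_1[of a]
    by (intro add_mono mult_left_mono) (auto simp: le_fun_def)
qed

lemma query_linear:
  assumes "bounded (range Z)" "bounded (range Z')"
  shows "query (\<lambda>c. u * r c + v * r' c) a (\<lambda>G. u * Z G + v * Z' G) G = u * query r a Z G + v * query r' a Z' G"
proof -
  have "(\<integral>M. u * Z (G - {#a#} + children a M) + v * Z' (G - {#a#} + children a M) \<partial>D (snd a))
      = (\<integral>M. u * Z (G - {#a#} + children a M) \<partial>D (snd a)) + (\<integral>M. v * Z' (G - {#a#} + children a M) \<partial>D (snd a))"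
    using assms by (intro Bochner_Integration.integral_add integrable_mult_right integrable_pmf_comp)
  then show ?thesis
    unfolding query_def by (simp add: algebra_simps)
qed

lemma query_abs_le:
  assumes R: "\<And>c. \<bar>r c\<bar> \<le> R" and B: "\<And>G. \<bar>Z G\<bar> \<le> B"
  shows "\<bar>query r a Z G\<bar> \<le> R + q * B"
proof -
  have "\<bar>q * (\<integral>M. Z (G - {#a#} + children a M) \<partial>D (snd a))\<bar> \<le> q * B"
    using B q_pos by (simp add: abs_mult expectation_abs_le)
  moreover have "\<bar>q * Z (G - {#a#})\<bar> \<le> q * B" "0 \<le> R"
    using B[of "G - {#a#}"] R[of "snd a"] q_pos by (simp_all add: abs_mult)
  ultimately show ?thesis
    unfolding query_def using R[of "snd a"] p_nonneg p_le_1
    by (intro convex_comb_abs_le) (auto simp: abs_le_iff)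
qed

definition run_step ::
    "('c \<Rightarrow> real) \<Rightarrow> 'c ntype list \<Rightarrow> ('c frontier \<Rightarrow> real) \<Rightarrow> ('c frontier \<Rightarrow> real) \<Rightarrow> 'c frontier \<Rightarrow> real" where
  "run_step r ps Y Z G = (case first_in ps G of None \<Rightarrow> Y G | Some a \<Rightarrow> query r a Z G)"

text \<open>\<open>run_value r ps Y G\<close>: expected discounted benefit \<open>r\<close> collected from the frontier \<open>G\<close>
  by always querying the earliest type of \<open>ps\<close> present, until no type of \<open>ps\<close> is left, plus
  the discounted terminal value \<open>Y\<close> of the frontier left at that time.\<close>

definition run_value :: "('c \<Rightarrow> real) \<Rightarrow> 'c ntype list \<Rightarrow> ('c frontier \<Rightarrow> real) \<Rightarrow> 'c frontier \<Rightarrow> real" where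
  "run_value r ps Y = iterate_limit (run_step r ps Y)"

lemma sup_contraction_run_step:
  assumes "bounded (range Y)"
  shows "sup_contraction q (run_step r ps Y)"
proof
  show "0 \<le> q" "q < 1"
    using q_pos q_less_1 by simp_all
next
  fix Z :: "'c frontier \<Rightarrow> real"
  assume "bounded (range Z)"
  then obtain B where B: "\<And>G. \<bar>Z G\<bar> \<le> B"
    by (auto simp: bounded_range_iff)
  obtain R where R: "\<And>c. \<bar>r c\<bar> \<le> R"
    using bounded_range_finite[of r] by (auto simp: bounded_range_iff)
  obtain C where C: "\<And>G. \<bar>Y G\<bar> \<le> C"
    using assms by (auto simp: bounded_range_iff)
  have "\<bar>query r a Z G\<bar> \<le> R + q * B" for a G
    using R B by (rule query_abs_le)
  then have "\<bar>run_step r ps Y Z G\<bar> \<le> max C (R + q * B)" for G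
    using C[of G] by (auto simp: run_step_def le_max_iff_disj split: option.split)
  then show "bounded (range (run_step r ps Y Z))"
    by (auto simp: bounded_range_iff)
next
  fix Z Z' :: "'c frontier \<Rightarrow> real" and d G
  assume Z: "bounded (range Z)" "bounded (range Z')" and d: "\<And>G. \<bar>Z G - Z' G\<bar> \<le> d"
  have "0 \<le> d"
    using d[of G] by linarith
  then show "\<bar>run_step r ps Y Z G - run_step r ps Y Z' G\<bar> \<le> q * d"
    using query_diff_abs_le[OF Z d] q_pos by (auto simp: run_step_def split: option.split)
qed

lemma bounded_run_value: "bounded (range Y) \<Longrightarrow> bounded (range (run_value r ps Y))"
  unfolding run_value_def by (rule sup_contraction.bounded_iterate_limit[OF sup_contraction_run_step])

lemma run_value_fixpoint: "bounded (range Y) \<Longrightarrow> run_step r ps Y (run_value r ps Y) = run_value r ps Y"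
  unfolding run_value_def by (rule sup_contraction.iterate_limit_fixpoint[OF sup_contraction_run_step])

lemma run_value_stop: "bounded (range Y) \<Longrightarrow> first_in ps G = None \<Longrightarrow> run_value r ps Y G = Y G"
  using run_value_fixpoint by (metis option.simps(4) run_step_def)

lemma run_value_query:
  "bounded (range Y) \<Longrightarrow> first_in ps G = Some a \<Longrightarrow> run_value r ps Y G = query r a (run_value r ps Y) G"
  using run_value_fixpoint by (metis option.simps(5) run_step_def)

lemma run_value_unique:
  assumes "bounded (range Y)" "bounded (range Z)"
    and "\<And>G. first_in ps G = None \<Longrightarrow> Z G = Y G"
    and "\<And>G a. first_in ps G = Some a \<Longrightarrow> Z G = query r a Z G"
  shows "run_value r ps Y = Z"
proof -
  have "run_step r ps Y Z = Z"
    using assms(3,4) by (auto simp: run_step_def split: option.split)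
  from sup_contraction.fixpoint_unique[OF sup_contraction_run_step[OF assms(1)] this assms(2)]
  show ?thesis
    by (simp add: run_value_def)
qed

context
  fixes r :: "'c \<Rightarrow> real" and ps :: "'c ntype list" and Y :: "'c frontier \<Rightarrow> real"
  assumes bounded_Y: "bounded (range Y)"
    and r_nonneg: "\<And>c. 0 \<le> r c"
    and Y_nonneg: "\<And>G. first_in ps G = None \<Longrightarrow> 0 \<le> Y G"
begin

lemma run_step_mono:
  "bounded (range Z) \<Longrightarrow> bounded (range Z') \<Longrightarrow> Z \<le> Z' \<Longrightarrow> run_step r ps Y Z \<le> run_step r ps Y Z'"
  by (auto simp: le_fun_def run_step_def query_mono split: option.split)

lemma run_step_nonneg_at_0: "(\<lambda>_. 0) \<le> run_step r ps Y (\<lambda>_. 0)"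
  using Y_nonneg r_nonneg p_nonneg by (auto simp: le_fun_def run_step_def query_def split: option.split)

lemma SUP_run_step_iterate: "(SUP n. (run_step r ps Y ^^ n) (\<lambda>_. 0) G) = run_value r ps Y G"
  unfolding run_value_def
  by (rule sup_contraction.SUP_iterate[OF sup_contraction_run_step[OF bounded_Y] run_step_mono run_step_nonneg_at_0])

lemma run_value_nonneg: "0 \<le> run_value r ps Y G"
  unfolding run_value_def
  by (rule sup_contraction.iterate_limit_nonneg[OF sup_contraction_run_step[OF bounded_Y] run_step_mono run_step_nonneg_at_0])

end

lemma run_value_linear:
  assumes "bounded (range Y)" "bounded (range Y')"
  shows "run_value (\<lambda>c. u * r c + v * r' c) ps (\<lambda>G. u * Y G + v * Y' G)
    = (\<lambda>G. u * run_value r ps Y G + v * run_value r' ps Y' G)"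
proof (rule run_value_unique)
  show "bounded (range (\<lambda>G. u * Y G + v * Y' G))"
    using assms by (rule bounded_range_linear)
  show "bounded (range (\<lambda>G. u * run_value r ps Y G + v * run_value r' ps Y' G))"
    using assms by (intro bounded_range_linear bounded_run_value)
  show "u * run_value r ps Y G + v * run_value r' ps Y' G = u * Y G + v * Y' G"
    if "first_in ps G = None" for G
    using assms that by (simp add: run_value_stop)
  show "u * run_value r ps Y G + v * run_value r' ps Y' G
      = query (\<lambda>c. u * r c + v * r' c) a (\<lambda>G. u * run_value r ps Y G + v * run_value r' ps Y' G) G"
    if "first_in ps G = Some a" for G a
    using assms that by (simp add: run_value_query query_linear bounded_run_value)
qed

abbreviation run_cont :: "'c ntype list \<Rightarrow> ('c frontier \<Rightarrow> real) \<Rightarrow> 'c frontier \<Rightarrow> real" where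
  "run_cont ps Y \<equiv> run_value (\<lambda>_. 0) ps Y"

lemma run_value_split:
  "bounded (range Y) \<Longrightarrow> run_value r ps Y G = run_value r ps (\<lambda>_. 0) G + run_cont ps Y G"
  using run_value_linear[of "\<lambda>_. 0" Y 1 r 1 "\<lambda>_. 0" ps] by (simp add: fun_eq_iff)

lemma run_cont_linear:
  assumes "bounded (range Y)" "bounded (range Y')"
  shows "run_cont ps (\<lambda>G. u * Y G + v * Y' G) G = u * run_cont ps Y G + v * run_cont ps Y' G"
  using run_value_linear[OF assms, of u "\<lambda>_. 0" v "\<lambda>_. 0" ps] by (simp add: fun_eq_iff)

lemma run_value_cong:
  assumes "bounded (range Y)" "bounded (range Y')" "\<And>G. set ps \<inter> set_mset G = {} \<Longrightarrow> Y G = Y' G"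
  shows "run_value r ps Y = run_value r ps Y'"
  using assms by (intro run_value_unique bounded_run_value)
    (auto simp: run_value_stop run_value_query first_in_None_iff)

lemma run_cont_mono:
  assumes "bounded (range Y)" "bounded (range Y')" "\<And>G. set ps \<inter> set_mset G = {} \<Longrightarrow> Y G \<le> Y' G"
  shows "run_cont ps Y G \<le> run_cont ps Y' G"
proof -
  have "0 \<le> run_cont ps (\<lambda>G. 1 * Y' G + (- 1) * Y G) G"
    using assms by (intro run_value_nonneg bounded_range_linear) (auto simp: first_in_None_iff)
  then show ?thesis
    using run_cont_linear[OF assms(2,1), of ps 1 "- 1"] by simp
qed

lemma run_cont_abs_le:
  assumes "\<And>G. \<bar>Y G\<bar> \<le> C"
  shows "\<bar>run_cont ps Y G\<bar> \<le> C"
proof -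
  have Y: "bounded (range Y)"
    using assms by (auto simp: bounded_range_iff)
  have "0 \<le> C"
    using assms[of "{#}"] by linarith
  have "\<bar>(run_step (\<lambda>_. 0) ps Y ^^ n) (\<lambda>_. 0) G\<bar> \<le> C" for n G
  proof (induction n arbitrary: G)
    case 0
    show ?case
      using \<open>0 \<le> C\<close> by simp
  next
    case (Suc n)
    let ?Z = "(run_step (\<lambda>_. 0) ps Y ^^ n) (\<lambda>_. 0)"
    have "\<bar>query (\<lambda>_. 0) a ?Z G\<bar> \<le> 0 + q * C" for a
      using Suc.IH by (intro query_abs_le) auto
    also have "\<dots> \<le> C"
      using \<open>0 \<le> C\<close> q_pos q_less_1 by (simp add: mult_left_le_one_le)
    finally show ?case
      using assms[of G] by (simp add: run_step_def[of _ _ _ ?Z] split: option.split)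
  qed
  then show ?thesis
    unfolding run_value_def by (rule sup_contraction.iterate_limit_abs_le[OF sup_contraction_run_step[OF Y]])
qed

lemma run_value_frame:
  assumes "bounded (range Y)" "set ps \<inter> set_mset H = {}"
  shows "run_value r ps Y (G + H) = run_value r ps (\<lambda>M. Y (M + H)) G"
proof -
  have "run_value r ps (\<lambda>M. Y (M + H)) = (\<lambda>G. run_value r ps Y (G + H))"
  proof (rule run_value_unique)
    show "bounded (range (\<lambda>M. Y (M + H)))" "bounded (range (\<lambda>G. run_value r ps Y (G + H)))"
      using assms(1) by (auto intro: bounded_range_comp bounded_run_value)
    show "run_value r ps Y (G + H) = Y (G + H)" if "first_in ps G = None" for G
      using assms that by (simp add: run_value_stop first_in_add_disjoint)
    show "run_value r ps Y (G + H) = query r a (\<lambda>G. run_value r ps Y (G + H)) G"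
      if "first_in ps G = Some a" for G a
    proof -
      have "a \<in># G"
        using first_in_SomeD[OF that] by simp
      then have "G + H - {#a#} = G - {#a#} + H"
        by (metis add.commute diff_union_single_conv)
      then show ?thesis
        using assms that
        by (simp add: run_value_query first_in_add_disjoint query_def add.commute add.left_commute)
    qed
  qed
  then show ?thesis
    by (simp add: fun_eq_iff)
qed

section \<open>Periods\<close>

text \<open>With \<open>r = b\<close> and \<open>Y = 0\<close> this is \<open>r(c, S)\<close> of the informal statement, with \<open>r = 0\<close> and
  \<open>Y = 1\<close> it is \<open>\<gamma>(c, S)\<close> (see \<open>period_r_eq_period\<close>, \<open>period_gamma_eq_period\<close>).\<close>

definition period :: "('c \<Rightarrow> real) \<Rightarrow> 'c ntype \<Rightarrow> 'c ntype list \<Rightarrow> ('c frontier \<Rightarrow> real) \<Rightarrow> real" where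
  "period r c S Y = query r c (run_value r S Y) {#c#}"

abbreviation period_cont :: "'c ntype \<Rightarrow> 'c ntype list \<Rightarrow> ('c frontier \<Rightarrow> real) \<Rightarrow> real" where
  "period_cont c S Y \<equiv> period (\<lambda>_. 0) c S Y"

lemma period_cont_expand:
  "period_cont c S Y = p c * q * (\<integral>M. run_cont S Y (children c M) \<partial>D (snd c)) + (1 - p c) * q * run_cont S Y {#}"
  unfolding period_def query_def by (simp add: algebra_simps)

lemma period_split:
  assumes "bounded (range Y)"
  shows "period r c S Y = period r c S (\<lambda>_. 0) + period_cont c S Y"
proof -
  have split: "run_value r S Y = (\<lambda>G. 1 * run_value r S (\<lambda>_. 0) G + 1 * run_cont S Y G)"
    by (rule ext) (simp add: run_value_split[OF assms, of r S])
  have "query (\<lambda>c'. 1 * r c' + 1 * 0) c (\<lambda>G. 1 * run_value r S (\<lambda>_. 0) G + 1 * run_cont S Y G) {#c#}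
      = 1 * period r c S (\<lambda>_. 0) + 1 * period_cont c S Y"
    unfolding period_def using assms by (intro query_linear bounded_run_value bounded_range_const)
  then show ?thesis
    by (simp add: period_def split)
qed

lemma query_run_value_eq_period:
  assumes "bounded (range Y)" "set S \<inter> set_mset (G - {#c#}) = {}"
  shows "query r c (run_value r S Y) G = period r c S (\<lambda>M. Y (M + (G - {#c#})))"
proof -
  have frame: "run_value r S (\<lambda>M. Y (M + (G - {#c#}))) X = run_value r S Y (X + (G - {#c#}))" for X
    using run_value_frame[OF assms] by simp
  show ?thesis
    unfolding period_def query_def frame by (simp add: add.commute)
qed

lemma period_cont_linear:
  assumes "bounded (range Y)" "bounded (range Y')"
  shows "period_cont c S (\<lambda>G. u * Y G + v * Y' G) = u * period_cont c S Y + v * period_cont c S Y'"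
proof -
  have "(\<integral>M. u * run_cont S Y (children c M) + v * run_cont S Y' (children c M) \<partial>D (snd c))
      = (\<integral>M. u * run_cont S Y (children c M) \<partial>D (snd c)) + (\<integral>M. v * run_cont S Y' (children c M) \<partial>D (snd c))"
    using assms by (intro Bochner_Integration.integral_add integrable_mult_right integrable_pmf_comp bounded_run_value)
  then show ?thesis
    unfolding period_cont_expand run_cont_linear[OF assms] by (simp add: algebra_simps)
qed

lemma period_cont_abs_le: "(\<And>G. \<bar>Y G\<bar> \<le> C) \<Longrightarrow> \<bar>period_cont c S Y\<bar> \<le> q * C"
  unfolding period_def using query_abs_le[of "\<lambda>_. 0" 0 "run_cont S Y" C] run_cont_abs_le by simp

lemma period_cont_mono:
  assumes "bounded (range Y)" "bounded (range Y')" "\<And>G. set S \<inter> set_mset G = {} \<Longrightarrow> Y G \<le> Y' G"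
  shows "period_cont c S Y \<le> period_cont c S Y'"
  unfolding period_def using assms by (intro query_mono bounded_run_value) (auto simp: le_fun_def run_cont_mono)

lemma period_cont_cong:
  assumes "bounded (range Y)" "bounded (range Y')" "\<And>G. set S \<inter> set_mset G = {} \<Longrightarrow> Y G = Y' G"
  shows "period_cont c S Y = period_cont c S Y'"
  unfolding period_def using run_value_cong[OF assms] by simp

text \<open>Functionals that behave like an expectation over randomness independent of the offspring
  distributions.  The continuation of a period is such a functional, so periods started from
  two distinct nodes commute.\<close>

definition offspring_commuting :: "(('x \<Rightarrow> real) \<Rightarrow> real) \<Rightarrow> bool" where
  "offspring_commuting \<Lambda> \<longleftrightarrow>
     (\<forall>f g u v. bounded (range f) \<longrightarrow> bounded (range g) \<longrightarrow>
        \<Lambda> (\<lambda>x. u * f x + v * g x) = u * \<Lambda> f + v * \<Lambda> g) \<and>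
     (\<forall>f C. (\<forall>x. \<bar>f x\<bar> \<le> C) \<longrightarrow> \<bar>\<Lambda> f\<bar> \<le> C) \<and>
     (\<forall>c g. bounded (range (case_prod g)) \<longrightarrow>
        \<Lambda> (\<lambda>x. \<integral>M. g x M \<partial>D c) = (\<integral>M. \<Lambda> (\<lambda>x. g x M) \<partial>D c))"

lemma offspring_commuting_expectation: "offspring_commuting (measure_pmf.expectation P)"
  unfolding offspring_commuting_def
  by (auto simp: integrable_pmf_bounded expectation_abs_le expectation_commute)

lemma bounded_range_case_prod_swap: "bounded (range (case_prod g)) \<Longrightarrow> bounded (range (\<lambda>(x, y). g y x))"
  for g :: "'a \<Rightarrow> 'b \<Rightarrow> real"
  by (auto simp: bounded_range_iff)

context
  fixes \<Lambda> :: "('x \<Rightarrow> real) \<Rightarrow> real" and g :: "'x \<Rightarrow> 'c frontier \<Rightarrow> real"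
  assumes \<Lambda>: "offspring_commuting \<Lambda>" and g: "bounded (range (case_prod g))"
begin

lemma offspring_commuting_linear:
  "bounded (range f) \<Longrightarrow> bounded (range f') \<Longrightarrow> \<Lambda> (\<lambda>x. u * f x + v * f' x) = u * \<Lambda> f + v * \<Lambda> f'"
  using \<Lambda> by (simp add: offspring_commuting_def)

lemma offspring_commuting_abs_le: "(\<And>x. \<bar>f x\<bar> \<le> C) \<Longrightarrow> \<bar>\<Lambda> f\<bar> \<le> C"
  using \<Lambda> by (simp add: offspring_commuting_def)

lemma offspring_commuting_swap_expectation:
  "bounded (range (case_prod h)) \<Longrightarrow> \<Lambda> (\<lambda>x. \<integral>M. h x M \<partial>D c) = (\<integral>M. \<Lambda> (\<lambda>x. h x M) \<partial>D c)"
  using \<Lambda> by (simp add: offspring_commuting_def)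

lemma offspring_commuting_swap_run_cont: "\<Lambda> (\<lambda>x. run_cont S (g x) G) = run_cont S (\<lambda>M. \<Lambda> (\<lambda>x. g x M)) G"
proof -
  obtain C where C: "\<And>x M. \<bar>g x M\<bar> \<le> C"
    using g by (auto simp: bounded_range_iff)
  have gx: "bounded (range (g x))" for x
    using C by (auto simp: bounded_range_iff)
  have R: "\<bar>run_cont S (g x) G\<bar> \<le> C" for x G
    using C by (rule run_cont_abs_le)
  have "run_cont S (\<lambda>M. \<Lambda> (\<lambda>x. g x M)) = (\<lambda>G. \<Lambda> (\<lambda>x. run_cont S (g x) G))"
  proof (rule run_value_unique)
    show "bounded (range (\<lambda>M. \<Lambda> (\<lambda>x. g x M)))" "bounded (range (\<lambda>G. \<Lambda> (\<lambda>x. run_cont S (g x) G)))"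
      using C R by (auto simp: bounded_range_iff intro!: exI[of _ C] offspring_commuting_abs_le)
    show "\<Lambda> (\<lambda>x. run_cont S (g x) G) = \<Lambda> (\<lambda>x. g x G)" if "first_in S G = None" for G
      using that gx by (simp add: run_value_stop)
    show "\<Lambda> (\<lambda>x. run_cont S (g x) G) = query (\<lambda>_. 0) a (\<lambda>G. \<Lambda> (\<lambda>x. run_cont S (g x) G)) G"
      if a: "first_in S G = Some a" for G a
    proof -
      let ?E = "\<lambda>x. \<integral>M. run_cont S (g x) (G - {#a#} + children a M) \<partial>D (snd a)"
      let ?R = "\<lambda>x. run_cont S (g x) (G - {#a#})"
      have "\<Lambda> (\<lambda>x. run_cont S (g x) G) = \<Lambda> (\<lambda>x. (p a * q) * ?E x + ((1 - p a) * q) * ?R x)"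
        using a gx by (simp add: run_value_query query_def algebra_simps)
      also have "\<dots> = (p a * q) * \<Lambda> ?E + ((1 - p a) * q) * \<Lambda> ?R"
        using R by (intro offspring_commuting_linear) (auto simp: bounded_range_iff intro!: expectation_abs_le)
      also have "\<Lambda> ?E = (\<integral>M. \<Lambda> (\<lambda>x. run_cont S (g x) (G - {#a#} + children a M)) \<partial>D (snd a))"
        using R by (intro offspring_commuting_swap_expectation) (auto simp: bounded_range_iff)
      finally show ?thesis
        by (simp add: query_def algebra_simps)
    qed
  qed
  then show ?thesis
    by (simp add: fun_eq_iff)
qed

lemma offspring_commuting_swap_period_cont: "\<Lambda> (\<lambda>x. period_cont c S (g x)) = period_cont c S (\<lambda>M. \<Lambda> (\<lambda>x. g x M))"
proof -
  obtain C where C: "\<And>x M. \<bar>g x M\<bar> \<le> C"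
    using g by (auto simp: bounded_range_iff)
  have R: "\<bar>run_cont S (g x) G\<bar> \<le> C" for x G
    using C by (rule run_cont_abs_le)
  let ?E = "\<lambda>x. \<integral>M. run_cont S (g x) (children c M) \<partial>D (snd c)"
  let ?R = "\<lambda>x. run_cont S (g x) {#}"
  have "\<Lambda> (\<lambda>x. period_cont c S (g x)) = \<Lambda> (\<lambda>x. (p c * q) * ?E x + ((1 - p c) * q) * ?R x)"
    by (simp add: period_cont_expand)
  also have "\<dots> = (p c * q) * \<Lambda> ?E + ((1 - p c) * q) * \<Lambda> ?R"
    using R by (intro offspring_commuting_linear) (auto simp: bounded_range_iff intro!: expectation_abs_le)
  also have "\<Lambda> ?E = (\<integral>M. \<Lambda> (\<lambda>x. run_cont S (g x) (children c M)) \<partial>D (snd c))"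
    using R by (intro offspring_commuting_swap_expectation) (auto simp: bounded_range_iff)
  finally show ?thesis
    by (simp add: period_cont_expand offspring_commuting_swap_run_cont)
qed

end

lemma offspring_commuting_period_cont: "offspring_commuting (period_cont j S)"
proof -
  have "\<bar>period_cont j S f\<bar> \<le> C" if "\<And>x. \<bar>f x\<bar> \<le> C" for f C
  proof -
    have "0 \<le> C"
      using that[of "{#}"] by linarith
    moreover have "\<bar>period_cont j S f\<bar> \<le> q * C"
      using that by (rule period_cont_abs_le)
    ultimately show ?thesis
      using q_pos q_less_1 by (smt (verit) mult_left_le_one_le)
  qed
  moreover have "period_cont j S (\<lambda>M. \<integral>M'. g M M' \<partial>D c) = (\<integral>M'. period_cont j S (\<lambda>M. g M M') \<partial>D c)"
    if "bounded (range (case_prod g))" for g c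
    using offspring_commuting_swap_period_cont[OF offspring_commuting_expectation bounded_range_case_prod_swap[OF that]]
    by simp
  ultimately show ?thesis
    unfolding offspring_commuting_def by (simp add: period_cont_linear)
qed

lemma period_cont_commute:
  assumes "bounded (range (case_prod f))"
  shows "period_cont c S (\<lambda>M. period_cont j S (f M)) = period_cont j S (\<lambda>M'. period_cont c S (\<lambda>M. f M M'))"
  using offspring_commuting_swap_period_cont[OF offspring_commuting_period_cont
      bounded_range_case_prod_swap[OF assms]]
  by simp

lemma discount_Suc: "exp (- \<beta> * real (Suc s)) = exp (- \<beta> * real s) * q"
  by (simp add: q_def algebra_simps flip: exp_add)

lemma PRn_period_ch_shifted:
  "0 < s \<Longrightarrow> PRn p b D \<beta> n (period_ch c S) G s = exp (- \<beta> * real s) * (run_step b S (\<lambda>_. 0) ^^ n) (\<lambda>_. 0) G"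
proof (induction n arbitrary: G s)
  case (Suc n)
  let ?Z = "(run_step b S (\<lambda>_. 0) ^^ n) (\<lambda>_. 0)"
  have "period_ch c S s G = first_in S G"
    using Suc.prems by (simp add: period_ch_def)
  moreover have "PRn p b D \<beta> n (period_ch c S) X (Suc s) = exp (- \<beta> * real s) * q * ?Z X" for X
    using Suc.IH[of "Suc s" X] unfolding discount_Suc by simp
  ultimately show ?case
    by (simp add: run_step_def[of _ _ _ ?Z] query_def Let_def algebra_simps split: option.split)
qed simp

lemma PGn_period_ch_shifted:
  "0 < s \<Longrightarrow> PGn p D \<beta> n (period_ch c S) G s = exp (- \<beta> * real s) * (run_step (\<lambda>_. 0) S (\<lambda>_. 1) ^^ n) (\<lambda>_. 0) G"
proof (induction n arbitrary: G s)
  case (Suc n)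
  let ?Z = "(run_step (\<lambda>_. 0) S (\<lambda>_. 1) ^^ n) (\<lambda>_. 0)"
  have "period_ch c S s G = first_in S G"
    using Suc.prems by (simp add: period_ch_def)
  moreover have "PGn p D \<beta> n (period_ch c S) X (Suc s) = exp (- \<beta> * real s) * q * ?Z X" for X
    using Suc.IH[of "Suc s" X] unfolding discount_Suc by simp
  ultimately show ?case
    by (simp add: run_step_def[of _ _ _ ?Z] query_def Let_def algebra_simps split: option.split)
qed simp

lemma SUP_eq_period:
  fixes X :: "nat \<Rightarrow> real"
  assumes Y: "bounded (range Y)" and r_nonneg: "\<And>c. 0 \<le> r c"
    and Y_nonneg: "\<And>G. first_in S G = None \<Longrightarrow> 0 \<le> Y G"
    and X_0: "X 0 = 0" and X_Suc: "\<And>n. X (Suc n) = query r c ((run_step r S Y ^^ n) (\<lambda>_. 0)) {#c#}"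
  shows "(SUP n. X n) = period r c S Y"
proof (rule SUP_eq_lim)
  interpret sup_contraction q "run_step r S Y"
    using Y by (rule sup_contraction_run_step)
  have "iterate n \<le> iterate (Suc n)" for n
  proof (rule le_funI)
    fix G
    show "iterate n G \<le> iterate (Suc n) G"
      using incseq_iterate[OF run_step_mono[OF Y r_nonneg Y_nonneg] run_step_nonneg_at_0[OF Y r_nonneg Y_nonneg]]
      by (rule incseqD) simp_all
  qed
  then have "X (Suc n) \<le> X (Suc (Suc n))" for n
    unfolding X_Suc by (intro query_mono bounded_iterate)
  moreover have "X 0 \<le> X (Suc 0)"
    using r_nonneg p_nonneg by (simp add: X_0 X_Suc query_def)
  ultimately show "incseq X"
    by (intro incseq_SucI) (case_tac n, simp_all)
  obtain K where K: "\<And>n G. \<bar>iterate_limit (run_step r S Y) G - iterate n G\<bar> \<le> q ^ n * K"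
    using iterate_limit_error by blast
  have "\<bar>X (Suc n) - period r c S Y\<bar> \<le> q ^ n * (q * K)" for n
  proof -
    have "\<bar>query r c (iterate n) {#c#} - query r c (run_value r S Y) {#c#}\<bar> \<le> q * (q ^ n * K)"
      using K by (intro query_diff_abs_le bounded_iterate bounded_run_value Y)
        (simp add: run_value_def abs_minus_commute)
    then show ?thesis
      by (simp add: X_Suc period_def mult.left_commute)
  qed
  then have "(\<lambda>n. X (Suc n)) \<longlonglongrightarrow> period r c S Y"
    using q_pos q_less_1 by (intro LIMSEQ_if_geometric_error) simp_all
  then show "X \<longlonglongrightarrow> period r c S Y"
    by (rule LIMSEQ_imp_Suc)
qed

lemma period_r_eq_period: "period_r p b D \<beta> c S = period b c S (\<lambda>_. 0)"
  unfolding period_r_def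
proof (rule SUP_eq_period)
  show "PRn p b D \<beta> (Suc n) (period_ch c S) {#c#} 0 = query b c ((run_step b S (\<lambda>_. 0) ^^ n) (\<lambda>_. 0)) {#c#}" for n
    using PRn_period_ch_shifted[of 1 n c S] discount_Suc[of 0]
    by (simp add: period_ch_def query_def Let_def)
qed (use b_unit in simp_all)

lemma period_gamma_eq_period: "period_gamma p D \<beta> c S = period_cont c S (\<lambda>_. 1)"
  unfolding period_gamma_def
proof (rule SUP_eq_period)
  show "PGn p D \<beta> (Suc n) (period_ch c S) {#c#} 0 = query (\<lambda>_. 0) c ((run_step (\<lambda>_. 0) S (\<lambda>_. 1) ^^ n) (\<lambda>_. 0)) {#c#}" for n
    using PGn_period_ch_shifted[of 1 n c S] discount_Suc[of 0]
    by (simp add: period_ch_def query_def Let_def)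
qed simp_all

abbreviation \<rho> :: "'c ntype \<Rightarrow> 'c ntype list \<Rightarrow> real" where
  "\<rho> c S \<equiv> period_r p b D \<beta> c S"

abbreviation \<gamma> :: "'c ntype \<Rightarrow> 'c ntype list \<Rightarrow> real" where
  "\<gamma> c S \<equiv> period_gamma p D \<beta> c S"

section \<open>The interchange argument\<close>

lemma period_gamma_le_q: "\<gamma> c S \<le> q"
  using period_cont_abs_le[of "\<lambda>_. 1" 1 c S] by (simp add: period_gamma_eq_period)

lemma period_gamma_Nil: "\<gamma> c [] = q"
proof -
  have "run_cont [] (\<lambda>_. 1) = (\<lambda>_. 1)"
    by (rule ext) (simp add: run_value_stop first_in_def)
  then show ?thesis
    by (simp add: period_gamma_eq_period period_def query_def algebra_simps)
qed

lemma period_cont_add_const: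
  "bounded (range Y) \<Longrightarrow> period_cont c S (\<lambda>M. u + Y M) = u * \<gamma> c S + period_cont c S Y"
  using period_cont_linear[where Y = "\<lambda>_. 1" and Y' = Y and u = u and v = 1] by (simp add: period_gamma_eq_period)

lemma constructed_order_cross:
  assumes "constructed_order p b D \<beta> \<sigma>" "k < length \<sigma>" "j \<notin> set (take k \<sigma>)"
  shows "\<rho> j (take k \<sigma>) * (1 - \<gamma> (\<sigma> ! k) (take k \<sigma>)) \<le> \<rho> (\<sigma> ! k) (take k \<sigma>) * (1 - \<gamma> j (take k \<sigma>))"
proof (cases "k = 0")
  case True
  then have "\<rho> j [] \<le> \<rho> (\<sigma> ! 0) []"
    using assms(1) unfolding constructed_order_def by blast
  then show ?thesis
    using True q_less_1 by (simp add: period_gamma_Nil)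
next
  case False
  have "\<gamma> i (take k \<sigma>) < 1" for i
    using period_gamma_le_q q_less_1 by (rule le_less_trans)
  moreover have "\<rho> j (take k \<sigma>) / (1 - \<gamma> j (take k \<sigma>))
      \<le> \<rho> (\<sigma> ! k) (take k \<sigma>) / (1 - \<gamma> (\<sigma> ! k) (take k \<sigma>))"
    using assms \<open>k \<noteq> 0\<close> unfolding constructed_order_def by (metis less_one linorder_not_le)
  ultimately show ?thesis
    by (simp add: field_simps)
qed

definition index_value :: "'c ntype list \<Rightarrow> 'c frontier \<Rightarrow> real" where
  "index_value \<sigma> = run_value b \<sigma> (\<lambda>_. 0)"

definition lookahead :: "'c ntype list \<Rightarrow> 'c frontier \<Rightarrow> 'c ntype \<Rightarrow> real" where
  "lookahead \<sigma> G j = query b j (index_value \<sigma>) G"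

lemma bounded_index_value: "bounded (range (index_value \<sigma>))"
  unfolding index_value_def by (simp add: bounded_run_value)

lemma index_value_nonneg: "0 \<le> index_value \<sigma> G"
  unfolding index_value_def using b_unit by (intro run_value_nonneg) simp_all

lemma index_value_eq_lookahead: "first_in \<sigma> G = Some a \<Longrightarrow> index_value \<sigma> G = lookahead \<sigma> G a"
  unfolding index_value_def lookahead_def by (simp add: run_value_query)

lemma index_value_restart: "run_value b (take k \<sigma>) (index_value \<sigma>) = index_value \<sigma>"
proof (rule run_value_unique)
  show "index_value \<sigma> G = query b a (index_value \<sigma>) G" if "first_in (take k \<sigma>) G = Some a" for G a
    using first_in_take[OF that] by (simp add: index_value_eq_lookahead lookahead_def)
qed (simp_all add: bounded_index_value)

lemma lookahead_period:
  assumes "set (take k \<sigma>) \<inter> set_mset G = {}"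
  shows "lookahead \<sigma> G j
    = \<rho> j (take k \<sigma>) + period_cont j (take k \<sigma>) (\<lambda>M. index_value \<sigma> (M + (G - {#j#})))"
proof -
  let ?Y = "\<lambda>M. index_value \<sigma> (M + (G - {#j#}))"
  have "set (take k \<sigma>) \<inter> set_mset (G - {#j#}) = {}"
    using assms by (auto dest: in_diffD)
  then have "lookahead \<sigma> G j = period b j (take k \<sigma>) ?Y"
    unfolding lookahead_def
    using query_run_value_eq_period[OF bounded_index_value, of "take k \<sigma>" G j b \<sigma>]
    by (simp add: index_value_restart)
  also have "\<dots> = period b j (take k \<sigma>) (\<lambda>_. 0) + period_cont j (take k \<sigma>) ?Y"
    by (rule period_split) (rule bounded_range_comp[OF bounded_index_value])
  finally show ?thesis
    by (simp add: period_r_eq_period)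
qed

lemma index_value_period:
  assumes "k < length \<sigma>" "set (take k \<sigma>) \<inter> set_mset G = {}" "\<sigma> ! k \<in># G"
  shows "index_value \<sigma> G
    = \<rho> (\<sigma> ! k) (take k \<sigma>) + period_cont (\<sigma> ! k) (take k \<sigma>) (\<lambda>M. index_value \<sigma> (M + (G - {#\<sigma> ! k#})))"
  using assms by (simp add: index_value_eq_lookahead first_in_nth lookahead_period)

lemma bounded_period_cont: "bounded (range (case_prod f)) \<Longrightarrow> bounded (range (\<lambda>x. period_cont c S (f x)))"
proof -
  assume "bounded (range (case_prod f))"
  then obtain C where "\<And>x y. \<bar>f x y\<bar> \<le> C"
    by (auto simp: bounded_range_iff)
  then have "\<bar>period_cont c S (f x)\<bar> \<le> q * C" for x
    by (rule period_cont_abs_le)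
  then show ?thesis
    by (auto simp: bounded_range_iff)
qed

lemma bounded_index_value_case_prod: "bounded (range (\<lambda>(x, y). index_value \<sigma> (g x y)))"
  unfolding case_prod_beta by (rule bounded_range_comp[OF bounded_index_value])

context
  fixes \<sigma> :: "'c ntype list" and k :: nat and G :: "'c frontier" and j :: "'c ntype"
  assumes k: "k < length \<sigma>"
    and G_avoids: "set (take k \<sigma>) \<inter> set_mset G = {}"
    and c_in: "\<sigma> ! k \<in># G" and j_in: "j \<in># G" and j_neq: "j \<noteq> \<sigma> ! k"
begin

abbreviation (input) S :: "'c ntype list" where "S \<equiv> take k \<sigma>"
abbreviation (input) c :: "'c ntype" where "c \<equiv> \<sigma> ! k"
abbreviation (input) H :: "'c frontier" where "H \<equiv> G - {#c#} - {#j#}"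

lemma in_diff_other: "j \<in># G - {#c#}" "c \<in># G - {#j#}"
  using c_in j_in j_neq by (simp_all add: in_diff_count)

lemma lookahead_two_periods:
  "lookahead \<sigma> G j = \<rho> j S + \<rho> c S * \<gamma> j S
     + period_cont j S (\<lambda>M'. period_cont c S (\<lambda>M. index_value \<sigma> (M + M' + H)))"
proof -
  have "index_value \<sigma> (M' + (G - {#j#})) = \<rho> c S + period_cont c S (\<lambda>M. index_value \<sigma> (M + M' + H))"
    if "set S \<inter> set_mset M' = {}" for M'
  proof -
    have "set S \<inter> set_mset (M' + (G - {#j#})) = {}"
      using that G_avoids by (auto dest: in_diffD)
    moreover have "M + (M' + (G - {#j#}) - {#c#}) = M + M' + H" for M
      using in_diff_other(2) by (simp add: diff_union_single_conv diff_right_commute add_mset_commute add.assoc)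
    ultimately show ?thesis
      using index_value_period[OF k, of "M' + (G - {#j#})"] in_diff_other(2) by simp
  qed
  moreover have B: "bounded (range (\<lambda>M'. period_cont c S (\<lambda>M. index_value \<sigma> (M + M' + H))))"
    by (rule bounded_period_cont[OF bounded_index_value_case_prod])
  ultimately have "period_cont j S (\<lambda>M'. index_value \<sigma> (M' + (G - {#j#})))
      = period_cont j S (\<lambda>M'. \<rho> c S + period_cont c S (\<lambda>M. index_value \<sigma> (M + M' + H)))"
    by (intro period_cont_cong bounded_range_comp[OF bounded_index_value] bounded_range_const_add) simp_all
  also have "\<dots> = \<rho> c S * \<gamma> j S + period_cont j S (\<lambda>M'. period_cont c S (\<lambda>M. index_value \<sigma> (M + M' + H)))"
    using B by (rule period_cont_add_const)
  finally show ?thesis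
    using lookahead_period[OF G_avoids, of j] by simp
qed

lemma index_value_ge_two_periods:
  assumes gap: "\<And>G' j'. set S \<inter> set_mset G' = {} \<Longrightarrow> j' \<in># G' \<Longrightarrow> lookahead \<sigma> G' j' - index_value \<sigma> G' \<le> \<delta>"
  shows "\<rho> c S + (\<rho> j S - \<delta>) * \<gamma> c S
      + period_cont c S (\<lambda>M. period_cont j S (\<lambda>M'. index_value \<sigma> (M + M' + H))) \<le> index_value \<sigma> G"
proof -
  have "\<rho> j S - \<delta> + period_cont j S (\<lambda>M'. index_value \<sigma> (M + M' + H)) \<le> index_value \<sigma> (M + (G - {#c#}))"
    if "set S \<inter> set_mset M = {}" for M
  proof -
    have avoids: "set S \<inter> set_mset (M + (G - {#c#})) = {}"
      using that G_avoids by (auto dest: in_diffD)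
    have shift: "(\<lambda>M'. index_value \<sigma> (M' + (M + (G - {#c#}) - {#j#}))) = (\<lambda>M'. index_value \<sigma> (M + M' + H))"
      using in_diff_other(1) by (simp add: diff_union_single_conv diff_right_commute add_mset_commute add_ac)
    have "lookahead \<sigma> (M + (G - {#c#})) j = \<rho> j S + period_cont j S (\<lambda>M'. index_value \<sigma> (M + M' + H))"
      using lookahead_period[OF avoids, of j] unfolding shift .
    moreover have "lookahead \<sigma> (M + (G - {#c#})) j - index_value \<sigma> (M + (G - {#c#})) \<le> \<delta>"
      using gap[OF avoids] in_diff_other(1) by simp
    ultimately show ?thesis
      by simp
  qed
  moreover have B: "bounded (range (\<lambda>M. period_cont j S (\<lambda>M'. index_value \<sigma> (M + M' + H))))"
    by (rule bounded_period_cont[OF bounded_index_value_case_prod])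
  ultimately have "period_cont c S (\<lambda>M. (\<rho> j S - \<delta>) + period_cont j S (\<lambda>M'. index_value \<sigma> (M + M' + H)))
      \<le> period_cont c S (\<lambda>M. index_value \<sigma> (M + (G - {#c#})))"
    by (intro period_cont_mono bounded_range_comp[OF bounded_index_value] bounded_range_const_add) simp_all
  then show ?thesis
    using index_value_period[OF k G_avoids c_in] period_cont_add_const[OF B] by simp
qed

end

lemma lookahead_gap_contracts:
  assumes co: "constructed_order p b D \<beta> \<sigma>" and k: "k < length \<sigma>"
    and next_le: "\<And>G j. set (take (Suc k) \<sigma>) \<inter> set_mset G = {} \<Longrightarrow> j \<in># G \<Longrightarrow> lookahead \<sigma> G j \<le> index_value \<sigma> G"
    and gap: "\<And>G j. set (take k \<sigma>) \<inter> set_mset G = {} \<Longrightarrow> j \<in># G \<Longrightarrow> lookahead \<sigma> G j - index_value \<sigma> G \<le> \<delta>"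
    and \<delta>: "0 \<le> \<delta>" and G: "set (take k \<sigma>) \<inter> set_mset G = {}" and j: "j \<in># G"
  shows "lookahead \<sigma> G j - index_value \<sigma> G \<le> q * \<delta>"
proof -
  let ?S = "take k \<sigma>" and ?c = "\<sigma> ! k"
  have "0 \<le> q * \<delta>"
    using \<delta> q_pos by simp
  consider "?c \<notin># G" | "j = ?c" | "?c \<in># G" "j \<noteq> ?c"
    by blast
  then show ?thesis
  proof cases
    case 1
    then have "set (take (Suc k) \<sigma>) \<inter> set_mset G = {}"
      using G k by (simp add: take_Suc_conv_app_nth)
    then show ?thesis
      using next_le[OF _ j] \<open>0 \<le> q * \<delta>\<close> by force
  next
    case 2
    then show ?thesis
      using first_in_nth[OF k G] j \<open>0 \<le> q * \<delta>\<close> by (simp add: index_value_eq_lookahead)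
  next
    case 3
    let ?X = "period_cont j ?S (\<lambda>M'. period_cont ?c ?S (\<lambda>M. index_value \<sigma> (M + M' + (G - {#?c#} - {#j#}))))"
    have Q: "lookahead \<sigma> G j = \<rho> j ?S + \<rho> ?c ?S * \<gamma> j ?S + ?X"
      by (rule lookahead_two_periods[OF k G 3(1) j 3(2)])
    have W: "\<rho> ?c ?S + (\<rho> j ?S - \<delta>) * \<gamma> ?c ?S + ?X \<le> index_value \<sigma> G"
      using index_value_ge_two_periods[OF k G 3(1) j 3(2) gap]
        period_cont_commute[OF bounded_index_value_case_prod[of \<sigma> "\<lambda>M M'. M + M' + (G - {#?c#} - {#j#})"]]
      by simp
    have "\<rho> j ?S * (1 - \<gamma> ?c ?S) \<le> \<rho> ?c ?S * (1 - \<gamma> j ?S)"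
      using constructed_order_cross[OF co k] G j by blast
    moreover have "\<delta> * \<gamma> ?c ?S \<le> \<delta> * q"
      using period_gamma_le_q \<delta> by (rule mult_left_mono)
    ultimately show ?thesis
      using Q W by (simp add: algebra_simps)
  qed
qed

lemma bellman_inequality:
  assumes co: "constructed_order p b D \<beta> \<sigma>" and j: "j \<in># G"
  shows "lookahead \<sigma> G j \<le> index_value \<sigma> G"
proof -
  obtain K where K: "\<And>G. \<bar>index_value \<sigma> G\<bar> \<le> K"
    using bounded_index_value by (auto simp: bounded_range_iff)
  have gap_bound: "lookahead \<sigma> G j - index_value \<sigma> G \<le> 1 + q * K" for G j
  proof -
    have "\<bar>lookahead \<sigma> G j\<bar> \<le> 1 + q * K"
      unfolding lookahead_def using b_unit K by (intro query_abs_le) (simp add: abs_le_iff)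
    then show ?thesis
      using index_value_nonneg[of \<sigma> G] by linarith
  qed
  have "\<forall>G j. set (take k \<sigma>) \<inter> set_mset G = {} \<longrightarrow> j \<in># G \<longrightarrow> lookahead \<sigma> G j \<le> index_value \<sigma> G"
    if "k \<le> length \<sigma>" for k
    using that
  proof (induction k rule: inc_induct)
    case base
    have "set \<sigma> = UNIV"
      using co by (simp add: constructed_order_def is_type_order_def)
    then show ?case
      by auto
  next
    case (step k)
    let ?P = "\<lambda>(G, j). set (take k \<sigma>) \<inter> set_mset G = {} \<and> j \<in># G"
    let ?f = "\<lambda>(G, j). lookahead \<sigma> G j - index_value \<sigma> G"
    have "?f x \<le> q * \<delta>" if \<delta>: "0 \<le> \<delta>" and gap: "\<And>y. ?P y \<Longrightarrow> ?f y \<le> \<delta>" and x: "?P x" for \<delta> x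
    proof -
      obtain G' j' where x_eq: "x = (G', j')"
        by (cases x)
      have "lookahead \<sigma> G' j' - index_value \<sigma> G' \<le> q * \<delta>"
      proof (rule lookahead_gap_contracts[OF co step.hyps(2) _ _ \<delta>])
        show "lookahead \<sigma> G j \<le> index_value \<sigma> G"
          if "set (take (Suc k) \<sigma>) \<inter> set_mset G = {}" "j \<in># G" for G j
          using step.IH that by blast
        show "lookahead \<sigma> G j - index_value \<sigma> G \<le> \<delta>"
          if "set (take k \<sigma>) \<inter> set_mset G = {}" "j \<in># G" for G j
          using gap[of "(G, j)"] that by simp
      qed (use x x_eq in auto)
      then show ?thesis
        using x_eq by simp
    qed
    then have "?f (G, j) \<le> 0" if "?P (G, j)" for G j
      using q_pos q_less_1 gap_bound that
      by (intro nonpos_if_bound_contracts[where P = ?P and C = "1 + q * K"]) auto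
    then show ?case
      by auto
  qed
  from this[of 0] show ?thesis
    using j by (metis empty_set inf_bot_left take_0 zero_le)
qed

section \<open>Optimality of the index policy\<close>

lemma Vn_abs_le: "\<bar>Vn p b D \<beta> n pol h F\<bar> \<le> real n"
proof (induction n arbitrary: h F)
  case (Suc n)
  show ?case
  proof (cases "F = {#}")
    case False
    let ?ty = "pol h F"
    have "\<bar>b (snd ?ty) * exp (- \<beta> * real (length h))\<bar> \<le> 1"
      using b_unit[of "snd ?ty"] \<beta>_pos by (simp add: abs_mult mult_le_one)
    moreover have "\<bar>\<integral>M. Vn p b D \<beta> n pol (h @ [(?ty, Some M)]) (F - {#?ty#} + children ?ty M) \<partial>D (snd ?ty)\<bar> \<le> real n"
      using Suc.IH by (rule expectation_abs_le)
    moreover have "\<bar>Vn p b D \<beta> n pol (h @ [(?ty, None)]) (F - {#?ty#})\<bar> \<le> real n"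
      by (rule Suc.IH)
    ultimately show ?thesis
      using False p_nonneg p_le_1 by (simp add: Let_def, intro convex_comb_abs_le) auto
  qed simp
qed simp

lemma Vn_le_index_value:
  assumes pol: "valid_policy pol" and bellman: "\<And>G j. j \<in># G \<Longrightarrow> lookahead \<sigma> G j \<le> index_value \<sigma> G"
  shows "Vn p b D \<beta> n pol h F \<le> exp (- \<beta> * real (length h)) * index_value \<sigma> F"
proof (induction n arbitrary: h F)
  case 0
  then show ?case
    using index_value_nonneg by simp
next
  case (Suc n)
  show ?case
  proof (cases "F = {#}")
    case True
    then show ?thesis
      using index_value_nonneg by simp
  next
    case False
    let ?ty = "pol h F" and ?e = "exp (- \<beta> * real (length h))"
    let ?F = "\<lambda>M. F - {#?ty#} + children ?ty M"
    have IH: "Vn p b D \<beta> n pol (h @ [x]) G \<le> ?e * q * index_value \<sigma> G" for x G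
      using Suc.IH[of "h @ [x]" G] unfolding length_append_singleton discount_Suc .
    have "(\<integral>M. Vn p b D \<beta> n pol (h @ [(?ty, Some M)]) (?F M) \<partial>D (snd ?ty))
        \<le> (\<integral>M. ?e * q * index_value \<sigma> (?F M) \<partial>D (snd ?ty))"
      using IH Vn_abs_le
      by (intro integral_mono integrable_mult_right integrable_pmf_comp bounded_index_value
          measure_pmf.integrable_const_bound[where B = "real n"]) auto
    then have "Vn p b D \<beta> (Suc n) pol h F
        \<le> p ?ty * (b (snd ?ty) * ?e + (\<integral>M. ?e * q * index_value \<sigma> (?F M) \<partial>D (snd ?ty)))
          + (1 - p ?ty) * (?e * q * index_value \<sigma> (F - {#?ty#}))"
      using False IH[of "(?ty, None)" "F - {#?ty#}"] p_nonneg[of ?ty] p_le_1[of ?ty] b_unit[of "snd ?ty"]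
      by (simp add: Let_def) (intro add_mono mult_left_mono, simp_all)
    also have "\<dots> = ?e * lookahead \<sigma> F ?ty"
      by (simp add: lookahead_def query_def algebra_simps)
    also have "\<dots> \<le> ?e * index_value \<sigma> F"
      using pol False by (intro mult_left_mono bellman) (auto simp: valid_policy_def)
    finally show ?thesis .
  qed
qed

lemma Vn_index_policy:
  assumes "set \<sigma> = UNIV"
  shows "Vn p b D \<beta> n (index_policy \<sigma>) h F
    = exp (- \<beta> * real (length h)) * (run_step b \<sigma> (\<lambda>_. 0) ^^ n) (\<lambda>_. 0) F"
proof (induction n arbitrary: h F)
  case (Suc n)
  let ?Z = "(run_step b \<sigma> (\<lambda>_. 0) ^^ n) (\<lambda>_. 0)"
  have IH: "Vn p b D \<beta> n (index_policy \<sigma>) (h @ [x]) G = exp (- \<beta> * real (length h)) * q * ?Z G" for x G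
    using Suc.IH[of "h @ [x]" G] unfolding length_append_singleton discount_Suc .
  show ?case
  proof (cases "F = {#}")
    case True
    then show ?thesis
      by (simp add: run_step_def first_in_def)
  next
    case False
    then obtain a where a: "first_in \<sigma> F = Some a"
      using first_in_UNIV[OF assms] by (metis not_None_eq)
    moreover have "index_policy \<sigma> h F = a"
      using a by (simp add: index_policy_def)
    ultimately show ?thesis
      using False by (simp add: run_step_def[of _ _ _ ?Z] query_def IH Let_def algebra_simps)
  qed
qed simp

lemma valid_index_policy: "set \<sigma> = UNIV \<Longrightarrow> valid_policy (index_policy \<sigma>)"
  unfolding valid_policy_def index_policy_def
  by (auto dest: first_in_SomeD first_in_UNIV split: option.split)

lemma policy_value_index_policy:
  assumes "set \<sigma> = UNIV"
  shows "policy_value p b D \<beta> (index_policy \<sigma>) F = index_value \<sigma> F"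
  unfolding policy_value_def Vn_index_policy[OF assms] index_value_def
  using SUP_run_step_iterate[OF bounded_range_const, of b \<sigma> 0] b_unit by simp

lemma constructed_order_optimal:
  assumes co: "constructed_order p b D \<beta> \<sigma>"
  shows "optimal_policy p b D \<beta> (index_policy \<sigma>)"
proof -
  have UNIV: "set \<sigma> = UNIV"
    using co by (simp add: constructed_order_def is_type_order_def)
  have "policy_value p b D \<beta> pol F \<le> policy_value p b D \<beta> (index_policy \<sigma>) F"
    if "valid_policy pol" for pol F
    unfolding policy_value_def[of _ _ _ _ pol] policy_value_index_policy[OF UNIV]
    using Vn_le_index_value[OF that bellman_inequality[OF co], of _ "[]" F]
    by (intro cSUP_least) simp_all
  then show ?thesis
    unfolding optimal_policy_def using valid_index_policy[OF UNIV] by blast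
qed

lemma constructed_order_exists: "\<exists>\<sigma>. constructed_order p b D \<beta> \<sigma>"
proof -
  let ?score = "\<lambda>S i. if S = [] then \<rho> i S else \<rho> i S / (1 - \<gamma> i S)"
  obtain \<sigma> where \<sigma>: "distinct \<sigma>" "set \<sigma> = UNIV"
    and greedy: "\<And>k i. k < length \<sigma> \<Longrightarrow> i \<notin> set (take k \<sigma>) \<Longrightarrow> ?score (take k \<sigma>) i \<le> ?score (take k \<sigma>) (\<sigma> ! k)"
    using greedy_enumeration_exists[of ?score] by blast
  have "0 < length \<sigma>"
    using \<sigma>(2) by (metis empty_set length_greater_0_conv UNIV_not_empty)
  then have "\<rho> i [] \<le> \<rho> (\<sigma> ! 0) []" for i
    using greedy[of 0 i] by simp
  moreover have "\<rho> i (take k \<sigma>) / (1 - \<gamma> i (take k \<sigma>)) \<le> \<rho> (\<sigma> ! k) (take k \<sigma>) / (1 - \<gamma> (\<sigma> ! k) (take k \<sigma>))"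
    if "1 \<le> k" "k < length \<sigma>" "i \<notin> set (take k \<sigma>)" for k i
    using greedy[OF that(2,3)] that(1,2) \<open>0 < length \<sigma>\<close> by simp
  ultimately have "constructed_order p b D \<beta> \<sigma>"
    unfolding constructed_order_def is_type_order_def using \<sigma> by blast
  then show ?thesis ..
qed

end

theorem theorem8p1:
  fixes p :: "('c::finite) ntype \<Rightarrow> real"
    and b :: "'c \<Rightarrow> real"
    and D :: "'c \<Rightarrow> 'c multiset pmf"
    and \<beta> :: real
  assumes "\<And>ty. 0 \<le> p ty \<and> p ty \<le> 1"
    and "\<And>c. 0 \<le> b c \<and> b c \<le> 1"
    and "\<beta> > 0"
  shows "(\<exists>\<sigma>. is_type_order \<sigma> \<and> optimal_policy p b D \<beta> (index_policy \<sigma>))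
       \<and> (\<forall>\<sigma>. constructed_order p b D \<beta> \<sigma> \<longrightarrow> optimal_policy p b D \<beta> (index_policy \<sigma>))"
proof -
  interpret contact_tracing p b D \<beta>
    using assms by unfold_locales
  obtain \<sigma> where "constructed_order p b D \<beta> \<sigma>"
    using constructed_order_exists by blast
  then show ?thesis
    using constructed_order_optimal by (auto simp: constructed_order_def)
qed

end
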